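(* For every $d \in \{2,3,4,5,8,12,16,24,40\}$, the sequence $\left(\left\lfloor n^4/d \right\rfloor\right)_{n \ge 1}$ is eventually prime-free.
   Context: A sequence $(a_n)_{n\ge 1}$ of positive integers is called eventually prime-free if there exists an index $n_0$ such that $a_n$ is composite for all $n \ge n_0$. (Here, as in the paper, this is understood as: only finitely many terms $a_n$ are prime.) *)

theory Defs
  imports "HOL-Computational_Algebra.Primes"
begin

definition eventually_prime_free :: "(nat \<Rightarrow> nat) \<Rightarrow> bool" where
  "eventually_prime_free a \<longleftrightarrow> finite {n::nat. n \<ge> 1 \<and> prime (a n)}"

end

theory Submission
  imports Defs
begin

text \<open>If \<open>n\<^sup>4 mod d\<close> is a perfect square \<open>t\<^sup>2\<close>, then \<open>(n\<^sup>2 - t) (n\<^sup>2 + t) = d \<lfloor>n\<^sup>4/d\<rfloor>\<close>.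
  When the quotient \<open>q = \<lfloor>n\<^sup>4/d\<rfloor>\<close> is prime it divides one of the two factors, so the
  other factor divides \<open>d\<close>; in either case \<open>n\<^sup>2 - t \<le> d\<close>, hence \<open>n\<^sup>2 < 2d\<close>.
  For each listed \<open>d\<close> every fourth power is congruent to one of \<open>0, 1, 4, 9, 16, 25\<close>
  modulo \<open>d\<close>, so only the finitely many \<open>n\<^sup>2 < 2d\<close> can give a prime.\<close>

lemma factor_le_if_mult_eq_mult_prime:
  fixes x y d q :: nat
  assumes "prime q" and "d > 0" and "x * y = d * q"
  shows "x \<le> d \<or> y \<le> d"
proof -
  have cofactor_le: "v \<le> d" if "q dvd u" and "u * v = d * q" for u v
  proof -
    from \<open>q dvd u\<close> obtain a where "u = q * a" by blast
    with \<open>u * v = d * q\<close> \<open>prime q\<close> have "a * v = d"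
      by (simp add: algebra_simps prime_gt_0_nat)
    then show "v \<le> d" using \<open>d > 0\<close> by (metis dvd_imp_le dvd_triv_right)
  qed
  from assms(3) have "q dvd x * y" by simp
  with \<open>prime q\<close> have "q dvd x \<or> q dvd y" by (simp add: prime_dvd_mult_iff)
  then show ?thesis
    using cofactor_le[of x y] cofactor_le[of y x] assms(3) by (auto simp: mult.commute)
qed

lemma le_add_if_square_eq_mult_prime_plus_square:
  fixes a t d q :: nat
  assumes "prime q" and "d > 0" and "a\<^sup>2 = d * q + t\<^sup>2"
  shows "a \<le> d + t"
proof -
  have "t\<^sup>2 \<le> a\<^sup>2" using assms(3) by simp
  then have "t \<le> a" by (rule power2_le_imp_le) simp
  then have "(a - t) * (a + t) = a\<^sup>2 - t\<^sup>2"
    by (simp add: power2_eq_square algebra_simps diff_mult_distrib)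
  also have "\<dots> = d * q" using assms(3) by simp
  finally have "a - t \<le> d \<or> a + t \<le> d"
    using factor_le_if_mult_eq_mult_prime[OF assms(1,2)] by blast
  then show ?thesis by linarith
qed

lemma eventually_prime_free_fourth_power_div:
  fixes d :: nat
  assumes "d > 0" and squares: "\<forall>r<d. \<exists>t. r ^ 4 mod d = t\<^sup>2"
  shows "eventually_prime_free (\<lambda>n. n ^ 4 div d)"
  unfolding eventually_prime_free_def
proof (rule finite_subset)
  show "{n. 1 \<le> n \<and> prime (n ^ 4 div d)} \<subseteq> {..2 * d}"
  proof safe
    fix n assume "prime (n ^ 4 div d)"
    obtain t where "(n mod d) ^ 4 mod d = t\<^sup>2" using squares mod_less_divisor[OF \<open>d > 0\<close>] by blast
    then have t: "n ^ 4 mod d = t\<^sup>2" by (simp add: power_mod)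
    have "(n\<^sup>2)\<^sup>2 = d * (n ^ 4 div d) + n ^ 4 mod d" by (simp flip: power_mult)
    then have "(n\<^sup>2)\<^sup>2 = d * (n ^ 4 div d) + t\<^sup>2" by (simp only: t)
    with \<open>prime (n ^ 4 div d)\<close> \<open>d > 0\<close> have "n\<^sup>2 \<le> d + t"
      by (rule le_add_if_square_eq_mult_prime_plus_square)
    moreover have "t \<le> t\<^sup>2" by (simp add: power2_eq_square)
    moreover have "t\<^sup>2 < d" using t \<open>d > 0\<close> by (metis mod_less_divisor)
    moreover have "n \<le> n\<^sup>2" by (simp add: power2_eq_square)
    ultimately show "n \<le> 2 * d" by linarith
  qed
qed simp

theorem theorem3:
  fixes d :: nat
  assumes "d \<in> {2,3,4,5,8,12,16,24,40}"
  shows "eventually_prime_free (\<lambda>n. n ^ 4 div d)"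
proof (rule eventually_prime_free_fourth_power_div)
  show "d > 0" using assms by auto
  have residues: "\<forall>r\<in>{..<d}. r ^ 4 mod d \<in> {0, 1, 4, 9, 16, 25}"
    using assms by (elim insertE emptyE) (simp_all add: lessThan_nat_numeral)
  show "\<forall>r<d. \<exists>t. r ^ 4 mod d = t\<^sup>2"
  proof (intro allI impI)
    fix r assume "r < d"
    with residues have "r ^ 4 mod d \<in> (\<lambda>t. t\<^sup>2) ` {0, 1, 2, 3, 4, 5}" by simp
    then show "\<exists>t. r ^ 4 mod d = t\<^sup>2" by blast
  qed
qed

end
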